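(* Let $p$ be a prime, $q=p^l$ ($l\ge 1$), $m\ge 1$ an integer and $n=2m$. Let $\alpha$ be a primitive element of $\mathbb{F}_{q^n}$. For $0\leqslant r\leqslant n(q-1)$ and $k\in M_r$, let $$\Theta^{(r)}_k=\{\alpha^u \mid 0\leqslant u\leqslant q^n-1,\ \mathrm{wt}_q(u)=n(q-1)-r,\ |O(u)-E(u)|=k\}.$$ Then $$\big|\Theta^{(r)}_k\big|=\begin{cases}2\left(\sum_{i=0}^{m}(-1)^i\binom{m}{i}\binom{\frac{n(q-1)-r-k}{2}-iq+m-1}{\frac{n(q-1)-r-k}{2}-iq}\right)\left(\sum_{i=0}^{m}(-1)^i\binom{m}{i}\binom{\frac{n(q-1)-r+k}{2}-iq+m-1}{\frac{n(q-1)-r+k}{2}-iq}\right) & \text{if } k\neq 0,\\[2mm] \left(\sum_{i=0}^{m}(-1)^i\binom{m}{i}\binom{\frac{n(q-1)-r}{2}-iq+m-1}{\frac{n(q-1)-r}{2}-iq}\right)^2 & \text{if } k=0.\end{cases}$$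
   Context: Every integer $u$ with $0\leqslant u\leqslant q^n-1$ is written uniquely as $u=\sum_{i=0}^{n-1}u_iq^i$ with $u_i\in\{0,1,\dots,q-1\}$; $\mathrm{wt}_q(u)=\sum_{i=0}^{n-1}u_i$, $O(u)=\sum_{i \text{ odd}}u_i$, $E(u)=\sum_{i\text{ even}}u_i$ (indices $0\le i\le n-1$). For $0\leqslant r\leqslant n(q-1)$, $M_r$ is the set of even integers $k$ with $0\le k\le m(q-1)$ if $r$ is even, and the set of odd integers $k$ with $0\le k\le m(q-1)$ if $r$ is odd. Binomial coefficients $\binom{a}{b}$ with $b<0$ are taken to be $0$. *)

theory Defs
  imports Main "HOL-Computational_Algebra.Primes"
begin

definition qdigit :: "nat \<Rightarrow> nat \<Rightarrow> nat \<Rightarrow> nat" where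
  "qdigit q i u = (u div q ^ i) mod q"

definition wtq :: "nat \<Rightarrow> nat \<Rightarrow> nat \<Rightarrow> nat" where
  "wtq q n u = (\<Sum>i<n. qdigit q i u)"

definition Oq :: "nat \<Rightarrow> nat \<Rightarrow> nat \<Rightarrow> nat" where
  "Oq q n u = (\<Sum>i\<in>{i. i < n \<and> odd i}. qdigit q i u)"

definition Eq :: "nat \<Rightarrow> nat \<Rightarrow> nat \<Rightarrow> nat" where
  "Eq q n u = (\<Sum>i\<in>{i. i < n \<and> even i}. qdigit q i u)"

text \<open>Binomial coefficient with integer arguments, taken to be 0 when the lower index is negative.
  (Whenever it is used below with b \<ge> 0, the upper index is \<ge> 0.)\<close>
definition ibinom :: "int \<Rightarrow> int \<Rightarrow> int" where
  "ibinom a b = (if b < 0 then 0 else int (nat a choose nat b))"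

definition Ssum :: "nat \<Rightarrow> nat \<Rightarrow> int \<Rightarrow> int" where
  "Ssum m q t = (\<Sum>i=0..m. (-1) ^ i * int (m choose i) *
       ibinom (t - int i * int q + int m - 1) (t - int i * int q))"

end

theory Submission
  imports Defs "HOL-Library.FuncSet" "HOL-Computational_Algebra.Formal_Power_Series"
begin

(* Since alpha generates the multiplicative group of a field with q^n elements, the exponents
   0 <= u <= q^n - 1 give distinct powers except for alpha^0 = alpha^(q^n - 1); these two exponents
   have different digit sums, so Theta is in bijection with its set of exponents. Splitting the
   n = 2m base-q digits of u into its odd- and even-indexed halves identifies the exponents with
   pairs of vectors in {0..q-1}^m, and wt = O + E = n(q-1) - r together with |O - E| = k says that
   the two halves have digit sums (n(q-1) - r + k)/2 and (n(q-1) - r - k)/2 in some order. The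
   number of vectors in {0..q-1}^m with digit sum t is the coefficient of X^t in
   (1 + X + ... + X^(q-1))^m = (1 - X^q)^m / (1 - X)^m, which is the alternating sum Ssum m q t. *)

unbundle fps_syntax

lemma fps_one_minus_X_power_binomial:
  "(1 - fps_X ^ q) ^ m =
    (\<Sum>i\<le>m. fps_const ((-1) ^ i * of_nat (m choose i)) * fps_X ^ (i * q) :: 'a::comm_ring_1 fps)"
proof -
  have "(1 - fps_X ^ q) ^ m = (- (fps_X ^ q) + 1 :: 'a fps) ^ m"
    by simp
  also have "\<dots> = (\<Sum>i\<le>m. of_nat (m choose i) * (- (fps_X ^ q)) ^ i)"
    by (simp only: binomial_ring power_one mult_1_right)
  also have "\<dots> = (\<Sum>i\<le>m. fps_const ((-1) ^ i * of_nat (m choose i)) * fps_X ^ (i * q))"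
  proof (rule sum.cong)
    fix i
    have "fps_const ((-1) ^ i * of_nat (m choose i)) = ((-1) ^ i * of_nat (m choose i) :: 'a fps)"
      by (simp only: fps_const_mult[symmetric] fps_const_power[symmetric] fps_const_neg[symmetric]
          fps_const_1_eq_1 fps_of_nat)
    moreover have "(- (fps_X ^ q)) ^ i = (-1) ^ i * (fps_X ^ (i * q) :: 'a fps)"
      by (subst power_minus) (simp add: power_mult mult.commute[of i q])
    ultimately show "of_nat (m choose i) * (- (fps_X ^ q)) ^ i =
        fps_const ((-1) ^ i * of_nat (m choose i)) * (fps_X ^ (i * q) :: 'a fps)"
      by (simp only: ac_simps)
  qed simp
  finally show ?thesis .
qed

lemma card_bounded_tuples_with_sum:
  fixes m q s :: nat
  assumes "m > 0"
  shows "int (card {g \<in> {..<m} \<rightarrow>\<^sub>E {..<q}. sum g {..<m} = s}) =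
    (\<Sum>i\<le>m. (-1) ^ i * int (m choose i) *
       (if i * q \<le> s then int (m + (s - i * q) - 1 choose (s - i * q)) else 0))"
proof -
  (* The computation takes place over rat, where (1 - X)^m is invertible. *)
  define T where "T = {..<m} \<rightarrow>\<^sub>E {..<q}"
  define F :: "rat fps" where "F = (\<Sum>d<q. fps_X ^ d)"
  define G :: "rat fps" where "G = inverse ((1 - fps_X) ^ m)"
  have G_nth: "G $ k = of_nat (m + k - 1 choose k)" for k
    using one_minus_const_fps_X_neg_power'[OF assms, of "1 :: rat"] by (simp add: G_def)
  have "F ^ m = (\<Sum>g\<in>T. \<Prod>j<m. fps_X ^ g j)"
    unfolding F_def T_def by (subst prod_sum_PiE[symmetric]) auto
  also have "\<dots> = (\<Sum>g\<in>T. fps_X ^ sum g {..<m})"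
    by (simp add: power_sum)
  finally have "of_nat (card {g \<in> T. sum g {..<m} = s}) = F ^ m $ s"
    using finite_PiE[of "{..<m}" "\<lambda>_. {..<q}"]
    by (simp add: T_def fps_sum_nth eq_commute Int_def flip: of_bool_def)
  also have "F ^ m = (1 - fps_X ^ q) ^ m * G"
  proof -
    have "F * (1 - fps_X) = 1 - fps_X ^ q"
      unfolding F_def by (simp add: one_diff_power_eq mult.commute)
    then have "(1 - fps_X ^ q) ^ m * G = F ^ m * ((1 - fps_X) ^ m * G)"
      by (metis power_mult_distrib mult.assoc)
    then show ?thesis by (simp add: G_def inverse_mult_eq_1')
  qed
  also have "((1 - fps_X ^ q) ^ m * G) $ s =
    (\<Sum>i\<le>m. (-1) ^ i * of_nat (m choose i) *
       (if i * q \<le> s then of_nat (m + (s - i * q) - 1 choose (s - i * q)) else 0))"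
    by (simp add: fps_one_minus_X_power_binomial sum_distrib_right fps_sum_nth mult.assoc
        fps_X_power_mult_nth) (auto simp: G_nth intro!: sum.cong)
  finally have "rat_of_int (int (card {g \<in> T. sum g {..<m} = s})) = rat_of_int
    (\<Sum>i\<le>m. (-1) ^ i * int (m choose i) *
       (if i * q \<le> s then int (m + (s - i * q) - 1 choose (s - i * q)) else 0))"
    by (simp add: if_distrib[of rat_of_int] cong: if_cong)
  then show ?thesis
    unfolding T_def of_int_eq_iff .
qed

lemma ibinom_shifted:
  assumes "m > 0"
  shows "ibinom (t + int m - 1) t = (if 0 \<le> t then int (m + nat t - 1 choose nat t) else 0)"
proof (cases "0 \<le> t")
  case True
  then have "nat (t + int m - 1) = m + nat t - 1"
    using assms by (simp add: nat_diff_distrib nat_add_distrib)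
  with True show ?thesis
    by (simp add: ibinom_def)
qed (simp add: ibinom_def)

lemma card_bounded_tuples_with_sum_eq_Ssum:
  assumes "m > 0"
  shows "int (card {g \<in> {..<m} \<rightarrow>\<^sub>E {..<q}. int (sum g {..<m}) = t}) = Ssum m q t"
proof (cases "t < 0")
  case True
  then have "{g \<in> {..<m} \<rightarrow>\<^sub>E {..<q}. int (sum g {..<m}) = t} = {}"
    by (auto simp del: of_nat_sum)
  moreover have "t - int i * int q < 0" for i
    using True mult_nonneg_nonneg[of "int i" "int q"] by linarith
  then have "Ssum m q t = 0"
    by (simp add: Ssum_def ibinom_def)
  ultimately show ?thesis
    by (simp only: card.empty of_nat_0)
next
  case False
  then obtain s where t: "t = int s"
    by (metis nonneg_int_cases not_less)
  have "int (card {g \<in> {..<m} \<rightarrow>\<^sub>E {..<q}. int (sum g {..<m}) = t}) =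
    (\<Sum>i\<le>m. (-1) ^ i * int (m choose i) *
       (if i * q \<le> s then int (m + (s - i * q) - 1 choose (s - i * q)) else 0))"
    using card_bounded_tuples_with_sum[OF assms, of q s] by (simp add: t del: of_nat_sum)
  also have "\<dots> = Ssum m q t"
    unfolding Ssum_def atMost_atLeast0
  proof (intro sum.cong refl)
    fix i
    have "t - int i * int q = int s - int (i * q)"
      by (simp add: t)
    then show "(-1) ^ i * int (m choose i) *
       (if i * q \<le> s then int (m + (s - i * q) - 1 choose (s - i * q)) else 0) =
      (-1) ^ i * int (m choose i) * ibinom (t - int i * int q + int m - 1) (t - int i * int q)"
      by (simp add: ibinom_shifted[OF assms] nat_diff_distrib del: of_nat_mult)
  qed
  finally show ?thesis .
qed

lemma sum_qdigits_eq_mod: "(\<Sum>i<n. qdigit q i u * q ^ i) = u mod q ^ n"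
proof (induction n)
  case (Suc n)
  have "u mod q ^ Suc n = u mod (q ^ n * q)"
    by (simp only: power_Suc2)
  also have "\<dots> = q ^ n * (u div q ^ n mod q) + u mod q ^ n"
    by (rule mod_mult2_eq)
  finally show ?case
    using Suc by (simp add: qdigit_def)
qed simp

lemma qdigits_eq_imp_eq:
  assumes "u < q ^ n" "v < q ^ n" "\<And>i. i < n \<Longrightarrow> qdigit q i u = qdigit q i v"
  shows "u = v"
proof -
  have "u mod q ^ n = v mod q ^ n"
    using assms(3) by (simp flip: sum_qdigits_eq_mod)
  with assms(1,2) show ?thesis
    by simp
qed

lemma mult_minus_one_div_mod:
  fixes a b :: nat
  assumes "0 < a" "0 < b"
  shows "(a * b - 1) div a = b - 1" and "(a * b - 1) mod a = a - 1"
proof -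
  obtain c d where c: "a = Suc c" and d: "b = Suc d"
    using assms gr0_implies_Suc by metis
  have eq: "a * b - 1 = c + a * d"
    by (simp add: c d)
  have "c < a" and "a - 1 = c"
    by (simp_all add: c)
  then show "(a * b - 1) div a = b - 1" and "(a * b - 1) mod a = a - 1"
    unfolding eq using d by simp_all
qed

lemma qdigit_power_minus_one:
  assumes "0 < q" "i < n"
  shows "qdigit q i (q ^ n - 1) = q - 1"
proof -
  have "q ^ n = q ^ i * q ^ (n - i)" and "q ^ (n - i) = q * q ^ (n - i - 1)"
    using assms(2) by (simp_all add: Suc_diff_Suc flip: power_add power_Suc)
  then have "(q ^ n - 1) div q ^ i = q * q ^ (n - i - 1) - 1"
    using assms(1) mult_minus_one_div_mod(1)[of "q ^ i" "q ^ (n - i)"] by simp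
  then show ?thesis
    unfolding qdigit_def using assms(1) mult_minus_one_div_mod(2)[of q "q ^ (n - i - 1)"] by simp
qed

lemma wtq_power_minus_one:
  assumes "0 < q"
  shows "wtq q n (q ^ n - 1) = n * (q - 1)"
proof -
  have "wtq q n (q ^ n - 1) = (\<Sum>i<n. q - 1)"
    unfolding wtq_def using qdigit_power_minus_one[OF assms] by (intro sum.cong) simp_all
  then show ?thesis
    by simp
qed

lemma wtq_zero: "wtq q n 0 = 0"
  by (simp add: wtq_def qdigit_def)

lemma wtq_eq_Oq_plus_Eq: "wtq q n u = Oq q n u + Eq q n u"
proof -
  have "{..<n} = {i. i < n \<and> odd i} \<union> {i. i < n \<and> even i}"
    by auto
  then show ?thesis
    unfolding wtq_def Oq_def Eq_def by (simp add: sum.union_disjoint[symmetric] disjoint_iff)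
qed

definition odd_even_digits :: "nat \<Rightarrow> nat \<Rightarrow> nat \<Rightarrow> (nat \<Rightarrow> nat) \<times> (nat \<Rightarrow> nat)" where
  "odd_even_digits q m u =
     ((\<lambda>j\<in>{..<m}. qdigit q (2 * j + 1) u), (\<lambda>j\<in>{..<m}. qdigit q (2 * j) u))"

lemma Oq_eq_sum_odd_digits: "Oq q (2 * m) u = sum (fst (odd_even_digits q m u)) {..<m}"
proof -
  have "{i. i < 2 * m \<and> odd i} = (\<lambda>j. 2 * j + 1) ` {..<m}"
    by (auto elim!: oddE)
  then show ?thesis
    unfolding Oq_def odd_even_digits_def by (simp add: sum.reindex inj_on_def)
qed

lemma Eq_eq_sum_even_digits: "Eq q (2 * m) u = sum (snd (odd_even_digits q m u)) {..<m}"
proof -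
  have "{i. i < 2 * m \<and> even i} = (\<lambda>j. 2 * j) ` {..<m}"
    by (auto elim!: evenE)
  then show ?thesis
    unfolding Eq_def odd_even_digits_def by (simp add: sum.reindex inj_on_def)
qed

lemma bij_betw_odd_even_digits:
  fixes q m :: nat
  assumes "0 < q"
  defines "D \<equiv> {..<m} \<rightarrow>\<^sub>E {..<q}"
  shows "bij_betw (odd_even_digits q m) {..<q ^ (2 * m)} (D \<times> D)"
proof -
  have "inj_on (odd_even_digits q m) {..<q ^ (2 * m)}"
  proof (rule inj_onI)
    fix u v
    assume uv: "u \<in> {..<q ^ (2 * m)}" "v \<in> {..<q ^ (2 * m)}"
      and eq: "odd_even_digits q m u = odd_even_digits q m v"
    have "qdigit q i u = qdigit q i v" if i: "i < 2 * m" for i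
    proof (cases "even i")
      case True
      then obtain j where "i = 2 * j" "j < m" using i by (auto elim!: evenE)
      moreover have "snd (odd_even_digits q m u) j = snd (odd_even_digits q m v) j"
        using eq by simp
      ultimately show ?thesis
        by (simp add: odd_even_digits_def)
    next
      case False
      then obtain j where "i = 2 * j + 1" "j < m" using i by (auto elim!: oddE)
      moreover have "fst (odd_even_digits q m u) j = fst (odd_even_digits q m v) j"
        using eq by simp
      ultimately show ?thesis
        by (simp add: odd_even_digits_def)
    qed
    with uv show "u = v"
      by (intro qdigits_eq_imp_eq[of u q "2 * m" v]) auto
  qed
  moreover have "odd_even_digits q m u \<in> D \<times> D" for u
    unfolding D_def odd_even_digits_def using assms by (simp add: Pi_iff qdigit_def)
  moreover have "card (D \<times> D) = card {..<q ^ (2 * m)}"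
    by (simp add: D_def card_PiE card_cartesian_product mult_2 power_add)
  ultimately show ?thesis
    by (metis bij_betw_def card_image card_subset_eq finite_PiE finite_SigmaI finite_lessThan
        image_subsetI D_def)
qed

lemma card_odd_even_digit_sums:
  assumes "0 < m" "0 < q"
  shows "int (card {u. u < q ^ (2 * m) \<and> int (Oq q (2 * m) u) = a \<and> int (Eq q (2 * m) u) = b}) =
    Ssum m q a * Ssum m q b"
proof -
  define D where "D = {..<m} \<rightarrow>\<^sub>E {..<q}"
  define C where "C t = {g \<in> D. int (sum g {..<m}) = t}" for t
  have bij: "bij_betw (odd_even_digits q m)
      {u \<in> {..<q ^ (2 * m)}. int (Oq q (2 * m) u) = a \<and> int (Eq q (2 * m) u) = b}
      {y \<in> D \<times> D. int (sum (fst y) {..<m}) = a \<and> int (sum (snd y) {..<m}) = b}"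
    using bij_betw_odd_even_digits[OF assms(2), of m] unfolding D_def
    by (rule bij_betw_Collect) (simp only: Oq_eq_sum_odd_digits Eq_eq_sum_even_digits)
  have image: "{y \<in> D \<times> D. int (sum (fst y) {..<m}) = a \<and> int (sum (snd y) {..<m}) = b} = C a \<times> C b"
    unfolding C_def by (auto simp del: of_nat_sum)
  have "card {u \<in> {..<q ^ (2 * m)}. int (Oq q (2 * m) u) = a \<and> int (Eq q (2 * m) u) = b} =
      card (C a) * card (C b)"
    using bij_betw_same_card[OF bij] unfolding image card_cartesian_product .
  moreover have "int (card (C t)) = Ssum m q t" for t
    unfolding C_def D_def by (rule card_bounded_tuples_with_sum_eq_Ssum[OF assms(1)])
  ultimately show ?thesis
    by (simp only: lessThan_iff mem_Collect_eq of_nat_mult)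
qed

lemma sum_abs_diff_eq_iff:
  fixes a b w k :: int
  assumes "even (w + k)" "0 \<le> k"
  shows "(a + b = w \<and> \<bar>a - b\<bar> = k) \<longleftrightarrow>
    (a = (w + k) div 2 \<and> b = (w - k) div 2) \<or> (a = (w - k) div 2 \<and> b = (w + k) div 2)"
proof -
  obtain h where h: "w + k = 2 * h"
    using assms(1) by blast
  then have "(w + k) div 2 = h" and "(w - k) div 2 = h - k"
    by simp_all
  then show ?thesis
    using h assms(2) by (simp only:) arith
qed

lemma card_weight_and_digit_difference:
  fixes w k :: nat
  assumes "0 < m" "0 < q" "even (w + k)"
  shows "int (card {u. u < q ^ (2 * m) \<and> wtq q (2 * m) u = w
                  \<and> \<bar>int (Oq q (2 * m) u) - int (Eq q (2 * m) u)\<bar> = int k}) =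
    (if k \<noteq> 0 then 2 * Ssum m q ((int w - int k) div 2) * Ssum m q ((int w + int k) div 2)
     else Ssum m q (int w div 2) ^ 2)"
proof -
  define x where "x = (int w + int k) div 2"
  define y where "y = (int w - int k) div 2"
  define A where "A a b = {u. u < q ^ (2 * m) \<and> int (Oq q (2 * m) u) = a \<and> int (Eq q (2 * m) u) = b}"
    for a b
  have card_A: "int (card (A a b)) = Ssum m q a * Ssum m q b" for a b
    unfolding A_def using assms(1,2) by (rule card_odd_even_digit_sums)
  have "even (int w + int k)"
    using assms(3) by (simp flip: of_nat_add)
  then have sum_iff: "(int a + int b = int w \<and> \<bar>int a - int b\<bar> = int k) \<longleftrightarrow>
      (int a = x \<and> int b = y) \<or> (int a = y \<and> int b = x)" for a b
    unfolding x_def y_def by (rule sum_abs_diff_eq_iff) simp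
  have "wtq q (2 * m) u = w \<longleftrightarrow> int (Oq q (2 * m) u) + int (Eq q (2 * m) u) = int w" for u
    by (simp only: wtq_eq_Oq_plus_Eq of_nat_add[symmetric] of_nat_eq_iff)
  then have "(wtq q (2 * m) u = w \<and> \<bar>int (Oq q (2 * m) u) - int (Eq q (2 * m) u)\<bar> = int k) \<longleftrightarrow>
      (int (Oq q (2 * m) u) = x \<and> int (Eq q (2 * m) u) = y) \<or>
      (int (Oq q (2 * m) u) = y \<and> int (Eq q (2 * m) u) = x)" for u
    by (simp only: sum_iff)
  then have "{u. u < q ^ (2 * m) \<and> wtq q (2 * m) u = w
                  \<and> \<bar>int (Oq q (2 * m) u) - int (Eq q (2 * m) u)\<bar> = int k} = A x y \<union> A y x"
    unfolding A_def by (simp only: set_eq_iff mem_Collect_eq Un_iff) blast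
  moreover have "finite (A a b)" for a b
    unfolding A_def by simp
  ultimately show ?thesis
  proof (cases "k = 0")
    case True
    then have "x = y" and "x = int w div 2"
      unfolding x_def y_def by simp_all
    then show ?thesis
      using True \<open>_ = A x y \<union> A y x\<close> card_A[of x x] by (simp add: power2_eq_square)
  next
    case False
    then have "x \<noteq> y"
      unfolding x_def y_def by simp
    then have "A x y \<inter> A y x = {}"
      unfolding A_def by auto
    then show ?thesis
      using False \<open>_ = A x y \<union> A y x\<close> \<open>finite (A _ _)\<close> card_A[of x y] card_A[of y x]
      by (simp add: card_Un_disjoint x_def y_def)
  qed
qed

lemma generator_ne_zero:
  fixes \<alpha> :: "'a::{field,finite}"
  assumes gen: "\<forall>x::'a. x \<noteq> 0 \<longrightarrow> (\<exists>u::nat. x = \<alpha> ^ u)"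
    and "2 < card (UNIV :: 'a set)"
  shows "\<alpha> \<noteq> 0"
proof
  assume "\<alpha> = 0"
  have "x \<in> {0, 1}" for x :: 'a
  proof (cases "x = 0")
    case False
    then obtain u where "x = 0 ^ u"
      using gen \<open>\<alpha> = 0\<close> by auto
    then show ?thesis
      by (simp add: power_0_left)
  qed simp
  then have "card (UNIV :: 'a set) \<le> card {0, 1 :: 'a}"
    by (intro card_mono) auto
  then have "card (UNIV :: 'a set) \<le> 2"
    using card_insert_le_m1[of 2 "{1 :: 'a}"] by simp
  with assms(2) show False
    by simp
qed

lemma generator_power_eq_1_imp_card_le:
  fixes \<alpha> :: "'a::{field,finite}"
  assumes gen: "\<forall>x::'a. x \<noteq> 0 \<longrightarrow> (\<exists>u::nat. x = \<alpha> ^ u)"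
    and "0 < d" "\<alpha> ^ d = 1"
  shows "card (UNIV :: 'a set) - 1 \<le> d"
proof -
  have "UNIV - {0} \<subseteq> (\<lambda>j. \<alpha> ^ j) ` {..<d}"
  proof
    fix x :: 'a
    assume "x \<in> UNIV - {0}"
    then obtain u where "x = \<alpha> ^ u"
      using gen by auto
    also have "\<dots> = \<alpha> ^ (d * (u div d) + u mod d)"
      by simp
    also have "\<dots> = \<alpha> ^ (u mod d)"
      by (simp only: power_add power_mult assms(3) power_one mult_1)
    finally show "x \<in> (\<lambda>j. \<alpha> ^ j) ` {..<d}"
      using assms(2) by auto
  qed
  then have "card (UNIV - {0 :: 'a}) \<le> card ((\<lambda>j. \<alpha> ^ j) ` {..<d})"
    by (intro card_mono) simp_all
  also have "\<dots> \<le> d"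
    using card_image_le[of "{..<d}" "\<lambda>j. \<alpha> ^ j"] by simp
  finally have "card (UNIV - {0 :: 'a}) \<le> d" .
  then show ?thesis
    by (simp add: card_Diff_singleton)
qed

lemma inj_on_generator_power:
  fixes \<alpha> :: "'a::{field,finite}"
  assumes gen: "\<forall>x::'a. x \<noteq> 0 \<longrightarrow> (\<exists>u::nat. x = \<alpha> ^ u)"
    and "2 < card (UNIV :: 'a set)"
    and "S \<subseteq> {..card (UNIV :: 'a set) - 1}" and "\<not> {0, card (UNIV :: 'a set) - 1} \<subseteq> S"
  shows "inj_on (\<lambda>u. \<alpha> ^ u) S"
proof (rule linorder_inj_onI')
  fix u v
  assume "u \<in> S" "v \<in> S" "u < v"
  show "\<alpha> ^ u \<noteq> \<alpha> ^ v"
  proof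
    assume "\<alpha> ^ u = \<alpha> ^ v"
    moreover have "\<alpha> ^ v = \<alpha> ^ u * \<alpha> ^ (v - u)"
      using \<open>u < v\<close> by (simp flip: power_add)
    moreover have "\<alpha> \<noteq> 0"
      using gen assms(2) by (rule generator_ne_zero)
    ultimately have "\<alpha> ^ (v - u) = 1"
      by simp
    then have "card (UNIV :: 'a set) - 1 \<le> v - u"
      using gen \<open>u < v\<close> by (intro generator_power_eq_1_imp_card_le) auto
    then have "u = 0" and "v = card (UNIV :: 'a set) - 1"
      using \<open>v \<in> S\<close> \<open>u < v\<close> assms(3) by auto
    with \<open>u \<in> S\<close> \<open>v \<in> S\<close> assms(4) show False
      by simp
  qed
qed

theorem lemma3p2:
  fixes \<alpha> :: "'a::{field,finite}"
    and p l q m n r k :: nat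
  assumes "prime p" and "l \<ge> 1" and "q = p ^ l"
    and "m \<ge> 1" and "n = 2 * m"
    and "card (UNIV :: 'a set) = q ^ n"
    and "\<forall>x::'a. x \<noteq> 0 \<longrightarrow> (\<exists>u::nat. x = \<alpha> ^ u)"
    and "r \<le> n * (q - 1)"
    and "k \<le> m * (q - 1)" and "even k \<longleftrightarrow> even r"
  shows "int (card {\<alpha> ^ u | u. u \<le> q ^ n - 1 \<and> wtq q n u = n * (q - 1) - r
                      \<and> \<bar>int (Oq q n u) - int (Eq q n u)\<bar> = int k})
         = (if k \<noteq> 0
            then 2 * Ssum m q ((int (n * (q - 1)) - int r - int k) div 2)
                   * Ssum m q ((int (n * (q - 1)) - int r + int k) div 2)
            else (Ssum m q ((int (n * (q - 1)) - int r) div 2)) ^ 2)"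
proof -
  define w where "w = n * (q - 1) - r"
  define S where "S = {u. u < q ^ n \<and> wtq q n u = w \<and> \<bar>int (Oq q n u) - int (Eq q n u)\<bar> = int k}"
  have "2 \<le> p"
    using assms(1) by (rule prime_ge_2_nat)
  then have "2 \<le> q"
    using assms(2,3) self_le_power[of p l] by simp
  then have "q ^ 1 < q ^ n"
    using assms(4,5) by (intro power_strict_increasing) auto
  then have "2 < q ^ n" and "0 < n * (q - 1)"
    using \<open>2 \<le> q\<close> assms(4,5) by auto
  have "\<not> {0, q ^ n - 1} \<subseteq> S"
    using \<open>0 < n * (q - 1)\<close> wtq_power_minus_one[of q n] by (auto simp: S_def wtq_zero)
  then have "inj_on (\<lambda>u. \<alpha> ^ u) S"
    using assms(6,7) \<open>2 < q ^ n\<close> by (intro inj_on_generator_power) (auto simp: S_def)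
  moreover have "{\<alpha> ^ u | u. u \<le> q ^ n - 1 \<and> wtq q n u = n * (q - 1) - r
                      \<and> \<bar>int (Oq q n u) - int (Eq q n u)\<bar> = int k} = (\<lambda>u. \<alpha> ^ u) ` S"
    using \<open>2 < q ^ n\<close> by (auto simp: S_def w_def)
  moreover have "even (w + k)"
    using assms(5,8,10) by (auto simp: w_def)
  moreover have "int w = int (n * (q - 1)) - int r"
    using assms(8) by (simp add: w_def)
  ultimately show ?thesis
    using card_weight_and_digit_difference[of m q w k] assms(4,5) \<open>2 \<le> q\<close>
    by (simp add: card_image S_def)
qed

end
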